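(* Consider the group-weighted network variant described in the context, with two networks $(s_{N_k})_{k=1}^G$ and $(s'_{N_k})_{k=1}^G$ and all other parameters identical. Suppose $s'_{N_k}=z\,s_{N_k}$ for all $k$, where $1\le z\le 1/\max_k s_{N_k}$. Let $D_n^t$ and $D_n'^t$ be the corresponding sets of new-product consumers. Then $D_n^t\subseteq D_n'^t$ for all $t\ge1$.
   Context: Group-weighted network variant. There are $N$ individuals partitioned into $G\ge2$ nonempty groups $N_1,\dots,N_G$ (also denoting cardinalities). Members of $N_k$ have aspiration level $H_{N_k}$, with $H_{N_1}>\cdots>H_{N_G}$; write $H_i$ for individual $i$'s level. The incumbent $p_c$ gives payoff $v_L$ to everyone, where $H_{N_2}<v_L<H_{N_1}$. The new product $p_n$ gives individual $i$ the payoff $v_{Hi}\ge H_{N_1}$. Product similarities are $s_{p_c,p_c}=s_{p_n,p_n}=1$, $s_{p_n,p_c}=s_p\in(0,1)$ and $s_{p_c,p_n}=0$. A social network is a vector $(s_{N_k})_{k=1}^G$ with $s_{N_k}\in[0,1]$ and $\max_k s_{N_k}>0$. Individual similarities are $s_{i,i}=1$ and $s_{i,j}=s_{N_k}$ whenever $j\in N_k$ and $j\neq i$. Dynamics. In period $0$ everyone consumes $p_c$ ($D_c^0=\{1,\dots,N\}$, $D_n^0=\emptyset$). For $t\ge1$, $U_i^t(p_c)=\sum_{t'=0}^{t-1}\sum_{j\in D_c^{t'}}s_{i,j}(v_L-H_i)$ and $U_i^t(p_n)=s_pU_i^t(p_c)+\sum_{t'=0}^{t-1}\sum_{j\in D_n^{t'}}s_{i,j}(v_{Hj}-H_i)$.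 Individual $i\in D_n^t$ iff $U_i^t(p_n)>U_i^t(p_c)$; otherwise $i\in D_c^t$. *)

theory Defs
  imports Complex_Main
begin

text \<open>Individuals are 0..<N; grp i < G is the group of individual i; groups are 0..<G
  (group k here corresponds to N_{k+1} in the paper).  Hg k is the aspiration level of
  group k, vH i the payoff of the new product to individual i, s k the network weight of
  group k, sp the product similarity s_{p_n,p_c}.\<close>

definition sim :: "(nat \<Rightarrow> nat) \<Rightarrow> (nat \<Rightarrow> real) \<Rightarrow> nat \<Rightarrow> nat \<Rightarrow> real" where
  "sim grp s i j = (if i = j then 1 else s (grp j))"

text \<open>Cumulative utilities, given the history hs = [D_n^0, ..., D_n^{t-1}].
  D_c^{t'} is the complement {0..<N} - D_n^{t'}.\<close>

definition Ucur :: "nat \<Rightarrow> (nat \<Rightarrow> nat) \<Rightarrow> (nat \<Rightarrow> real) \<Rightarrow> (nat \<Rightarrow> real) \<Rightarrow> real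
    \<Rightarrow> nat set list \<Rightarrow> nat \<Rightarrow> real" where
  "Ucur N grp Hg s vL hs i =
     sum_list (map (\<lambda>D. \<Sum>j\<in>{..<N} - D. sim grp s i j * (vL - Hg (grp i))) hs)"

definition Unew :: "nat \<Rightarrow> (nat \<Rightarrow> nat) \<Rightarrow> (nat \<Rightarrow> real) \<Rightarrow> (nat \<Rightarrow> real) \<Rightarrow> real
    \<Rightarrow> (nat \<Rightarrow> real) \<Rightarrow> real \<Rightarrow> nat set list \<Rightarrow> nat \<Rightarrow> real" where
  "Unew N grp Hg s vL vH sp hs i =
     sp * Ucur N grp Hg s vL hs i
     + sum_list (map (\<lambda>D. \<Sum>j\<in>D. sim grp s i j * (vH j - Hg (grp i))) hs)"

primrec hist :: "nat \<Rightarrow> (nat \<Rightarrow> nat) \<Rightarrow> (nat \<Rightarrow> real) \<Rightarrow> (nat \<Rightarrow> real) \<Rightarrow> real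
    \<Rightarrow> (nat \<Rightarrow> real) \<Rightarrow> real \<Rightarrow> nat \<Rightarrow> nat set list" where
  "hist N grp Hg s vL vH sp 0 = [{}]"
| "hist N grp Hg s vL vH sp (Suc t) =
     hist N grp Hg s vL vH sp t @
       [{i. i < N \<and> Unew N grp Hg s vL vH sp (hist N grp Hg s vL vH sp t) i
                     > Ucur N grp Hg s vL (hist N grp Hg s vL vH sp t) i}]"

definition Dn :: "nat \<Rightarrow> (nat \<Rightarrow> nat) \<Rightarrow> (nat \<Rightarrow> real) \<Rightarrow> (nat \<Rightarrow> real) \<Rightarrow> real
    \<Rightarrow> (nat \<Rightarrow> real) \<Rightarrow> real \<Rightarrow> nat \<Rightarrow> nat set" where
  "Dn N grp Hg s vL vH sp t = hist N grp Hg s vL vH sp t ! t"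

end

theory Submission
  imports Defs
begin

text \<open>Write \<open>U\<^sub>i\<^sup>t(p\<^sub>n) - U\<^sub>i\<^sup>t(p\<^sub>c)\<close> as a sum over past periods of weighted contributions
  of all individuals.  Individuals who are dissatisfied with \<open>p\<^sub>c\<close> (\<open>v\<^sub>L < H\<^sub>i\<close>) receive only
  nonnegative contributions and a positive one from themselves, so they adopt \<open>p\<^sub>n\<close> from
  period 1 on under any network.  For a satisfied individual the contribution of every
  other individual is monotone in the set of adopters, so the adopter sets grow over time,
  and its own contribution is negative until it adopts.  Hence, once it has adopted, the
  accumulated contribution of the others is positive and stays positive.  Scaling the
  network by \<open>z \<ge> 1\<close> multiplies exactly this part by \<open>z\<close>, and the larger adopter sets of
  the scaled network only increase the sum further.  Beyond nonnegative weights, only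
  \<open>H\<^sub>i \<le> v\<^sub>H\<^sub>j\<close> and \<open>s\<^sub>p < 1\<close> are used.\<close>

lemma sum_lessThan_pos_extend:
  fixes a :: "nat \<Rightarrow> real"
  assumes step: "\<And>k. Suc k < n' \<Longrightarrow> a k \<le> a (Suc k)"
    and pos: "0 < (\<Sum>k<n. a k)" and "n \<le> n'"
  shows "0 < (\<Sum>k<n'. a k)"
proof -
  have mono: "a k \<le> a m" if "k \<le> m" "m < n'" for k m
    using that by (induction m rule: dec_induct) (auto intro: order.trans step)
  obtain m where n: "n = Suc m" using pos by (cases n) auto
  have "0 < a m"
  proof (rule ccontr)
    assume "\<not> 0 < a m"
    then have "a k \<le> 0" if "k < n" for k
      using mono[of k m] that n \<open>n \<le> n'\<close> by simp
    then have "(\<Sum>k<n. a k) \<le> 0"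
      by (intro sum_nonpos) simp
    with pos show False by linarith
  qed
  then have "0 \<le> (\<Sum>k\<in>{n..<n'}. a k)"
  proof (intro sum_nonneg)
    fix k assume "k \<in> {n..<n'}"
    then show "0 \<le> a k"
      using mono[of m k] n \<open>0 < a m\<close> by simp
  qed
  moreover have "(\<Sum>k<n'. a k) = (\<Sum>k<n. a k) + (\<Sum>k\<in>{n..<n'}. a k)"
    using \<open>n \<le> n'\<close> by (simp add: lessThan_atLeast0 sum.atLeastLessThan_concat)
  ultimately show ?thesis
    using pos by linarith
qed

lemma hist_length: "length (hist N grp Hg w vL vH sp t) = Suc t"
  by (induction t) auto

lemma hist_nth: "k \<le> t \<Longrightarrow> hist N grp Hg w vL vH sp t ! k = Dn N grp Hg w vL vH sp k"
proof (induction t)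
  case 0 then show ?case by (simp add: Dn_def)
next
  case (Suc t)
  then show ?case
    by (cases "k \<le> t") (auto simp: nth_append hist_length less_Suc_eq_le Dn_def le_Suc_eq)
qed

lemma hist_eq_map_Dn: "hist N grp Hg w vL vH sp t = map (Dn N grp Hg w vL vH sp) [0..<Suc t]"
  by (rule nth_equalityI) (simp_all add: hist_length hist_nth del: upt_Suc)

lemma Dn_0 [simp]: "Dn N grp Hg w vL vH sp 0 = {}"
  by (simp add: Dn_def)

lemma Dn_Suc: "Dn N grp Hg w vL vH sp (Suc t) = {i. i < N \<and>
    Ucur N grp Hg w vL (hist N grp Hg w vL vH sp t) i
      < Unew N grp Hg w vL vH sp (hist N grp Hg w vL vH sp t) i}"
  by (simp add: Dn_def nth_append hist_length)

lemma Dn_subset: "Dn N grp Hg w vL vH sp t \<subseteq> {..<N}"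
  by (cases t) (auto simp: Dn_Suc)

locale adoption_model =
  fixes N :: nat and grp :: "nat \<Rightarrow> nat" and Hg vH :: "nat \<Rightarrow> real" and vL sp :: real
  assumes new_meets_aspiration: "\<And>i j. i < N \<Longrightarrow> j < N \<Longrightarrow> Hg (grp i) \<le> vH j"
    and sp_lt_1: "sp < 1"
begin

abbreviation adopters :: "(nat \<Rightarrow> real) \<Rightarrow> nat \<Rightarrow> nat set" where
  "adopters w \<equiv> Dn N grp Hg w vL vH sp"

text \<open>What individual \<open>j\<close>'s choice in one period adds to \<open>U\<^sub>i(p\<^sub>n) - U\<^sub>i(p\<^sub>c)\<close>, before weighting:
  a \<open>p\<^sub>c\<close>-consumer adds \<open>v\<^sub>L - H\<^sub>i\<close> to \<open>U\<^sub>i(p\<^sub>c)\<close> and \<open>s\<^sub>p\<close> times that to \<open>U\<^sub>i(p\<^sub>n)\<close>.\<close>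

definition gap :: "nat set \<Rightarrow> nat \<Rightarrow> nat \<Rightarrow> real" where
  "gap D i j = (if j \<in> D then vH j - Hg (grp i) else (sp - 1) * (vL - Hg (grp i)))"

definition period_gap :: "(nat \<Rightarrow> real) \<Rightarrow> nat set \<Rightarrow> nat \<Rightarrow> real" where
  "period_gap w D i = (\<Sum>j<N. sim grp w i j * gap D i j)"

definition peer_gap :: "(nat \<Rightarrow> real) \<Rightarrow> nat set \<Rightarrow> nat \<Rightarrow> real" where
  "peer_gap w D i = (\<Sum>j\<in>{..<N} - {i}. w (grp j) * gap D i j)"

lemma period_gap_split:
  assumes "D \<subseteq> {..<N}"
  shows "period_gap w D i =
    (sp - 1) * (\<Sum>j\<in>{..<N} - D. sim grp w i j * (vL - Hg (grp i)))
    + (\<Sum>j\<in>D. sim grp w i j * (vH j - Hg (grp i)))"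
proof -
  have "period_gap w D i =
      (\<Sum>j\<in>{..<N} - D. sim grp w i j * gap D i j) + (\<Sum>j\<in>D. sim grp w i j * gap D i j)"
    unfolding period_gap_def using assms by (simp add: sum.subset_diff[of D "{..<N}"])
  then show ?thesis
    by (simp add: gap_def sum_distrib_left mult.left_commute)
qed

lemma Unew_minus_Ucur:
  "\<forall>D\<in>set hs. D \<subseteq> {..<N} \<Longrightarrow>
    Unew N grp Hg w vL vH sp hs i - Ucur N grp Hg w vL hs i = (\<Sum>D\<leftarrow>hs. period_gap w D i)"
  by (induction hs) (simp_all add: Unew_def Ucur_def period_gap_split algebra_simps)

lemma adopters_Suc_iff:
  "i \<in> adopters w (Suc t) \<longleftrightarrow> i < N \<and> 0 < (\<Sum>k<Suc t. period_gap w (adopters w k) i)"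
proof -
  let ?hs = "hist N grp Hg w vL vH sp t"
  have "\<forall>D\<in>set ?hs. D \<subseteq> {..<N}"
    using Dn_subset by (auto simp: hist_eq_map_Dn simp del: upt_Suc)
  moreover have "(\<Sum>D\<leftarrow>?hs. period_gap w D i) = (\<Sum>k<Suc t. period_gap w (adopters w k) i)"
    by (simp add: hist_eq_map_Dn sum_list_sum_nth atLeast0LessThan del: upt_Suc)
  ultimately show ?thesis
    using Unew_minus_Ucur[of ?hs w i] by (auto simp: Dn_Suc)
qed

lemma period_gap_eq_self_plus_peer:
  assumes "i < N"
  shows "period_gap w D i = gap D i i + peer_gap w D i"
proof -
  have "period_gap w D i =
      sim grp w i i * gap D i i + (\<Sum>j\<in>{..<N} - {i}. sim grp w i j * gap D i j)"
    unfolding period_gap_def using assms by (simp add: sum.remove)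
  then show ?thesis
    unfolding peer_gap_def by (simp add: sim_def)
qed

lemma peer_gap_scale:
  "(\<And>j. j < N \<Longrightarrow> w' (grp j) = z * w (grp j)) \<Longrightarrow> peer_gap w' D i = z * peer_gap w D i"
  unfolding peer_gap_def sum_distrib_left by (intro sum.cong) auto

lemma gap_mono:
  assumes "i < N" "j < N" "Hg (grp i) \<le> vL" "D \<subseteq> D'"
  shows "gap D i j \<le> gap D' i j"
proof -
  have "(sp - 1) * (vL - Hg (grp i)) \<le> 0"
    using assms(3) sp_lt_1 by (intro mult_nonpos_nonneg) auto
  moreover have "0 \<le> vH j - Hg (grp i)"
    using new_meets_aspiration assms(1,2) by fastforce
  ultimately show ?thesis
    using assms(4) by (auto simp: gap_def)
qed

context
  fixes w :: "nat \<Rightarrow> real"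
  assumes w_nonneg: "\<And>j. j < N \<Longrightarrow> 0 \<le> w (grp j)"
begin

lemma sim_nonneg: "j < N \<Longrightarrow> 0 \<le> sim grp w i j"
  by (simp add: sim_def w_nonneg)

lemma period_gap_mono:
  "i < N \<Longrightarrow> Hg (grp i) \<le> vL \<Longrightarrow> D \<subseteq> D' \<Longrightarrow> period_gap w D i \<le> period_gap w D' i"
  unfolding period_gap_def by (intro sum_mono mult_left_mono) (auto simp: gap_mono sim_nonneg)

lemma peer_gap_mono:
  "i < N \<Longrightarrow> Hg (grp i) \<le> vL \<Longrightarrow> D \<subseteq> D' \<Longrightarrow> peer_gap w D i \<le> peer_gap w D' i"
  unfolding peer_gap_def by (intro sum_mono mult_left_mono) (auto simp: gap_mono w_nonneg)

lemma dissatisfied_adopt: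
  assumes i: "i < N" "vL < Hg (grp i)"
  shows "i \<in> adopters w (Suc t)"
proof -
  have neg: "0 < (sp - 1) * (vL - Hg (grp i))"
    using i sp_lt_1 by (intro mult_neg_neg) auto
  have gap_nonneg: "0 \<le> gap D i j" if "j < N" for D j
    using neg new_meets_aspiration i that by (auto simp: gap_def)
  have period_nonneg: "0 \<le> period_gap w D i" for D
    unfolding period_gap_def
    by (intro sum_nonneg mult_nonneg_nonneg) (auto simp: gap_nonneg sim_nonneg)
  have "0 < sim grp w i i * gap {} i i"
    using neg by (simp add: sim_def gap_def)
  also have "\<dots> \<le> period_gap w {} i"
    unfolding period_gap_def using i
    by (intro member_le_sum[where f = "\<lambda>j. sim grp w i j * gap {} i j"] mult_nonneg_nonneg)
      (auto simp: gap_nonneg sim_nonneg)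
  also have "\<dots> \<le> (\<Sum>k<Suc t. period_gap w (adopters w k) i)"
    using member_le_sum[of 0 "{..<Suc t}" "\<lambda>k. period_gap w (adopters w k) i"]
    by (simp add: period_nonneg)
  finally show ?thesis
    using i by (simp add: adopters_Suc_iff)
qed

lemma adopters_Suc_mono: "adopters w t \<subseteq> adopters w (Suc t)"
proof (induction t rule: less_induct)
  case (less t)
  show ?case
  proof (cases t)
    case (Suc t')
    show ?thesis
    proof
      fix i assume "i \<in> adopters w t"
      then have i: "i < N" and pos: "0 < (\<Sum>k<Suc t'. period_gap w (adopters w k) i)"
        using Suc adopters_Suc_iff by blast+
      show "i \<in> adopters w (Suc t)"
      proof (cases "vL < Hg (grp i)")
        case True then show ?thesis using dissatisfied_adopt i by blast
      next
        case False
        have step: "period_gap w (adopters w k) i \<le> period_gap w (adopters w (Suc k)) i"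
          if "Suc k < Suc t" for k
        proof -
          have "adopters w k \<subseteq> adopters w (Suc k)"
            using less.IH that by simp
          then show ?thesis
            using period_gap_mono i False by simp
        qed
        have "0 < (\<Sum>k<Suc t. period_gap w (adopters w k) i)"
          by (rule sum_lessThan_pos_extend[OF step pos]) (simp_all add: Suc)
        then show ?thesis using i adopters_Suc_iff by blast
      qed
    qed
  qed simp
qed

lemma adopters_mono: "mono (adopters w)"
  by (simp add: mono_iff_le_Suc adopters_Suc_mono)

text \<open>A satisfied individual's own contribution is nonpositive until it adopts, so already
  its first adoption forces the peers' accumulated contribution to be positive.\<close>

lemma satisfied_adopter_peer_gap_pos:
  assumes i: "i \<in> adopters w (Suc t)" and sat: "Hg (grp i) \<le> vL"
  shows "0 < (\<Sum>k<Suc t. peer_gap w (adopters w k) i)"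
proof -
  have iN: "i < N" using i adopters_Suc_iff by blast
  obtain m where "m < Suc t" and out: "\<forall>k\<le>m. i \<notin> adopters w k" and "i \<in> adopters w (Suc m)"
    using ex_least_nat_less[of "\<lambda>k. i \<in> adopters w k", OF i] by auto
  then have "0 < (\<Sum>k<Suc m. period_gap w (adopters w k) i)"
    using adopters_Suc_iff by blast
  also have "\<dots> \<le> (\<Sum>k<Suc m. peer_gap w (adopters w k) i)"
  proof (intro sum_mono)
    fix k assume "k \<in> {..<Suc m}"
    moreover have "(sp - 1) * (vL - Hg (grp i)) \<le> 0"
      using sat sp_lt_1 by (intro mult_nonpos_nonneg) auto
    ultimately show "period_gap w (adopters w k) i \<le> peer_gap w (adopters w k) i"
      using out by (simp add: period_gap_eq_self_plus_peer[OF iN] gap_def)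
  qed
  finally have pos: "0 < (\<Sum>k<Suc m. peer_gap w (adopters w k) i)" .
  have step: "peer_gap w (adopters w k) i \<le> peer_gap w (adopters w (Suc k)) i" for k
    using peer_gap_mono[OF iN sat adopters_Suc_mono] .
  show ?thesis
    by (rule sum_lessThan_pos_extend[OF step pos]) (use \<open>m < Suc t\<close> in simp)
qed

end

lemma adopters_scale_mono:
  assumes s_nonneg: "\<And>j. j < N \<Longrightarrow> 0 \<le> s (grp j)"
    and s'_eq: "\<And>j. j < N \<Longrightarrow> s' (grp j) = z * s (grp j)" and "1 \<le> z"
  shows "adopters s t \<subseteq> adopters s' t"
proof (induction t rule: less_induct)
  case (less t)
  have s'_nonneg: "\<And>j. j < N \<Longrightarrow> 0 \<le> s' (grp j)"
    using s_nonneg s'_eq \<open>1 \<le> z\<close> by simp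
  show ?case
  proof (cases t)
    case (Suc t')
    show ?thesis
    proof
      fix i assume "i \<in> adopters s t"
      then have i: "i < N" and pos: "0 < (\<Sum>k<Suc t'. period_gap s (adopters s k) i)"
        using Suc adopters_Suc_iff by blast+
      show "i \<in> adopters s' t"
      proof (cases "vL < Hg (grp i)")
        case True
        then show ?thesis
          using dissatisfied_adopt[where w = s', OF s'_nonneg] i Suc by blast
      next
        case False
        let ?self = "\<Sum>k<Suc t'. gap (adopters s k) i i"
        let ?peer = "\<Sum>k<Suc t'. peer_gap s (adopters s k) i"
        have "0 < ?peer"
          using satisfied_adopter_peer_gap_pos s_nonneg \<open>i \<in> adopters s t\<close> Suc False by auto
        have "(\<Sum>k<Suc t'. period_gap s (adopters s k) i) = ?self + ?peer"
          by (simp add: period_gap_eq_self_plus_peer[OF i] sum.distrib)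
        also have "\<dots> \<le> ?self + z * ?peer"
          using \<open>0 < ?peer\<close> \<open>1 \<le> z\<close> by (simp add: mult_le_cancel_right1)
        also have "\<dots> = (\<Sum>k<Suc t'. period_gap s' (adopters s k) i)"
          by (simp only: period_gap_eq_self_plus_peer[OF i] sum.distrib sum_distrib_left
              peer_gap_scale[of s' z s, OF s'_eq])
        also have "\<dots> \<le> (\<Sum>k<Suc t'. period_gap s' (adopters s' k) i)"
          using less.IH Suc False i
          by (intro sum_mono period_gap_mono[where w = s', OF s'_nonneg]) auto
        finally show ?thesis
          using pos i Suc adopters_Suc_iff by auto
      qed
    qed
  qed simp
qed

end

lemma Hg_le_Hg_0:
  fixes Hg :: "nat \<Rightarrow> real"
  assumes "\<forall>k. Suc k < G \<longrightarrow> Hg (Suc k) < Hg k"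
  shows "k < G \<Longrightarrow> Hg k \<le> Hg 0"
  by (induction k) (use assms in \<open>auto intro: order.trans less_imp_le\<close>)

theorem proposition5:
  fixes N G :: nat and grp :: "nat \<Rightarrow> nat" and Hg vH s s' :: "nat \<Rightarrow> real"
    and vL sp z :: real
  assumes G2: "G \<ge> 2"
    and grp_range: "\<forall>i<N. grp i < G"
    and grp_nonempty: "\<forall>k<G. \<exists>i<N. grp i = k"
    and H_decr: "\<forall>k. Suc k < G \<longrightarrow> Hg (Suc k) < Hg k"
    and vL_bounds: "Hg 1 < vL" "vL < Hg 0"
    and vH_ge: "\<forall>i<N. vH i \<ge> Hg 0"
    and sp: "0 < sp" "sp < 1"
    and s_range: "\<forall>k<G. 0 \<le> s k \<and> s k \<le> 1"
    and s_pos: "\<exists>k<G. s k > 0"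
    and s'_def: "\<forall>k<G. s' k = z * s k"
    and z_bounds: "1 \<le> z" "z \<le> 1 / Max (s ` {..<G})"
  shows "\<forall>t\<ge>1. Dn N grp Hg s vL vH sp t \<subseteq> Dn N grp Hg s' vL vH sp t"
proof -
  interpret adoption_model N grp Hg vH vL sp
  proof
    fix i j assume "i < N" "j < N"
    then show "Hg (grp i) \<le> vH j"
      using Hg_le_Hg_0[OF H_decr] grp_range vH_ge by (meson order.trans)
  qed (rule sp(2))
  show ?thesis
    using adopters_scale_mono[of s s' z] grp_range s_range s'_def z_bounds(1) by auto
qed

end
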